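(* For any $\mathbf{p},\mathbf{q}\in\mathbb{R}_{\ge0}^{G_\Delta}$ with $\|\mathbf{p}\|_1=\|\mathbf{q}\|_1$ and any $\sigma>0$, $\mathrm{EMD}(\tilde H^\sigma_{\mathbf{p}},\tilde H^\sigma_{\mathbf{q}})\le\mathrm{EMD}(\mathbf{p},\mathbf{q})$.
   Context: $G_\Delta=\{(i/\Delta,j/\Delta):i,j\in\{0,\dots,\Delta-1\}\}$ and $\tilde G_\Delta=\{(i/\Delta,j/\Delta):i,j\in\mathbb{Z}\}$. For $\mathbf{p}\in\mathbb{R}_{\ge0}^{G_\Delta}$ the infinite heatmap is $\tilde H^\sigma_{\mathbf{p}}(a)=\sum_{a'\in G_\Delta}\frac1Z e^{-\|a-a'\|_2^2/(2\sigma^2)}\mathbf{p}(a')$ for $a\in\tilde G_\Delta$, where $Z=\sum_{d\in\tilde G_\Delta}e^{-\|d\|_2^2/(2\sigma^2)}$. For nonnegative $\mu,\nu$ on a set of points in $\mathbb{R}^2$ with equal total mass, $\mathrm{EMD}(\mu,\nu)=\inf_\gamma\sum_{x,y}\gamma(x,y)\|x-y\|_1$ over nonnegative $\gamma$ with marginals $\mu$ and $\nu$. *)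

theory Defs
  imports "HOL-Analysis.Analysis"
begin

type_synonym pt = "real \<times> real"

definition grid :: "nat \<Rightarrow> pt set" where
  "grid \<Delta> = {(real i / real \<Delta>, real j / real \<Delta>) | i j. i < \<Delta> \<and> j < \<Delta>}"

definition igrid :: "nat \<Rightarrow> pt set" where
  "igrid \<Delta> = {(real_of_int i / real \<Delta>, real_of_int j / real \<Delta>) | i j. True}"

definition sqdist2 :: "pt \<Rightarrow> pt \<Rightarrow> real" where
  "sqdist2 a b = (fst a - fst b)^2 + (snd a - snd b)^2"

definition l1dist :: "pt \<Rightarrow> pt \<Rightarrow> real" where
  "l1dist a b = \<bar>fst a - fst b\<bar> + \<bar>snd a - snd b\<bar>"

definition Zc :: "nat \<Rightarrow> real \<Rightarrow> real" where
  "Zc \<Delta> \<sigma> = (\<Sum>\<^sub>\<infinity> d \<in> igrid \<Delta>. exp (- sqdist2 d (0,0) / (2 * \<sigma>^2)))"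

definition heatmap :: "nat \<Rightarrow> real \<Rightarrow> (pt \<Rightarrow> real) \<Rightarrow> pt \<Rightarrow> real" where
  "heatmap \<Delta> \<sigma> p a =
     (\<Sum>a'\<in>grid \<Delta>. exp (- sqdist2 a a' / (2 * \<sigma>^2)) / Zc \<Delta> \<sigma> * p a')"

text \<open>Transport plans are nonnegative
  (ennreal-valued) functions on S x S with marginals mu and nu; sums are unconditional
  sums of nonnegative terms, so the value lives in ennreal (infinite if no plan).\<close>
definition EMD :: "pt set \<Rightarrow> (pt \<Rightarrow> real) \<Rightarrow> (pt \<Rightarrow> real) \<Rightarrow> ennreal" where
  "EMD S \<mu> \<nu> = Inf { (\<Sum>\<^sub>\<infinity> xy \<in> S \<times> S. \<gamma> xy * ennreal (l1dist (fst xy) (snd xy))) | \<gamma>.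
       (\<forall>x\<in>S. (\<Sum>\<^sub>\<infinity> y\<in>S. \<gamma> (x, y)) = ennreal (\<mu> x)) \<and>
       (\<forall>y\<in>S. (\<Sum>\<^sub>\<infinity> x\<in>S. \<gamma> (x, y)) = ennreal (\<nu> y)) }"

end

theory Submission imports Defs begin

(* Take any transport plan \<gamma> from p to q on the finite grid. Smear each transported mass
   \<gamma>(a, b) with the Gaussian around a and move every smeared piece rigidly by b - a. The
   Gaussian is translation invariant on the lattice, so the moved pieces form the Gaussian
   around b; hence the new plan couples the two heatmaps. Each piece travels exactly the l1
   distance of a and b, and the Gaussian has total mass 1, so the cost does not change. *)

lemma infsum_cmult_right_ennreal:
  fixes f :: "'a \<Rightarrow> ennreal"
  shows "(\<Sum>\<^sub>\<infinity>x\<in>A. c * f x) = c * (\<Sum>\<^sub>\<infinity>x\<in>A. f x)"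
proof -
  have "(\<Sum>\<^sub>\<infinity>x\<in>A. c * f x) = (SUP F\<in>{F. finite F \<and> F \<subseteq> A}. c * sum f F)"
    by (simp add: nonneg_infsum_complete sum_distrib_left)
  also have "\<dots> = c * (\<Sum>\<^sub>\<infinity>x\<in>A. f x)"
    by (simp add: nonneg_infsum_complete SUP_mult_left_ennreal)
  finally show ?thesis .
qed

lemma infsum_sum_ennreal:
  fixes f :: "'b \<Rightarrow> 'a \<Rightarrow> ennreal"
  assumes "finite F"
  shows "(\<Sum>\<^sub>\<infinity>x\<in>A. \<Sum>i\<in>F. f i x) = (\<Sum>i\<in>F. \<Sum>\<^sub>\<infinity>x\<in>A. f i x)"
  using assms
proof (induction F rule: finite_induct)
  case (insert i F)
  then show ?case
    by (simp add: infsum_add nonneg_summable_on_complete)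
qed simp

lemma infsum_ennreal:
  fixes g :: "'a \<Rightarrow> real"
  assumes "g summable_on A" "\<And>x. x \<in> A \<Longrightarrow> g x \<ge> 0"
  shows "(\<Sum>\<^sub>\<infinity>x\<in>A. ennreal (g x)) = ennreal (\<Sum>\<^sub>\<infinity>x\<in>A. g x)"
  using infsum_comm_additive_general[where f = ennreal and g = g and S = A] assms
  by (auto simp: comp_def subset_iff)

lemma infsum_of_bool_eq:
  fixes f :: "'a \<Rightarrow> 'b::{semiring_1, t2_space}"
  assumes "c \<in> A"
  shows "(\<Sum>\<^sub>\<infinity>x\<in>A. of_bool (x = c) * f x) = f c"
  using infsum_cong_neutral[of "{c}" A f "\<lambda>x. of_bool (x = c) * f x"] assms by auto

lemma infsum_translate:
  fixes f :: "'a::ab_group_add \<Rightarrow> 'b::{comm_monoid_add, t2_space}"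
  assumes "\<And>x y. x \<in> I \<Longrightarrow> y \<in> I \<Longrightarrow> x + y \<in> I"
    and "\<And>x y. x \<in> I \<Longrightarrow> y \<in> I \<Longrightarrow> x - y \<in> I"
    and "a \<in> I"
  shows "(\<Sum>\<^sub>\<infinity>x\<in>I. f (x - a)) = (\<Sum>\<^sub>\<infinity>d\<in>I. f d)"
proof -
  have "bij_betw (\<lambda>x. x - a) I I"
    by (rule bij_betwI[where g = "\<lambda>d. d + a"]) (use assms in auto)
  then show ?thesis
    by (rule infsum_reindex_bij_betw)
qed

(* The mass \<gamma>(a, b) is spread around a by the kernel k, and the part sitting at x is sent to
   x + (b - a). *)
definition convolved_plan ::
    "'a::ab_group_add set \<Rightarrow> ('a \<Rightarrow> ennreal) \<Rightarrow> ('a \<times> 'a \<Rightarrow> ennreal) \<Rightarrow> 'a \<times> 'a \<Rightarrow> ennreal" where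
  "convolved_plan G k \<gamma> =
     (\<lambda>(x, y). \<Sum>ab\<in>G \<times> G. of_bool (y = x + (snd ab - fst ab)) * (\<gamma> ab * k (x - fst ab)))"

lemma convolved_plan_marginal_fst:
  assumes "finite G" and "\<And>a b. a \<in> G \<Longrightarrow> b \<in> G \<Longrightarrow> x + (b - a) \<in> I"
  shows "(\<Sum>\<^sub>\<infinity>y\<in>I. convolved_plan G k \<gamma> (x, y)) = (\<Sum>a\<in>G. (\<Sum>b\<in>G. \<gamma> (a, b)) * k (x - a))"
proof -
  have "(\<Sum>\<^sub>\<infinity>y\<in>I. convolved_plan G k \<gamma> (x, y))
      = (\<Sum>ab\<in>G \<times> G. \<Sum>\<^sub>\<infinity>y\<in>I. of_bool (y = x + (snd ab - fst ab)) * (\<gamma> ab * k (x - fst ab)))"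
    unfolding convolved_plan_def prod.case using assms(1) by (intro infsum_sum_ennreal) simp
  also have "\<dots> = (\<Sum>ab\<in>G \<times> G. \<gamma> ab * k (x - fst ab))"
    using assms(2) by (intro sum.cong) (auto simp: infsum_of_bool_eq)
  also have "\<dots> = (\<Sum>a\<in>G. (\<Sum>b\<in>G. \<gamma> (a, b)) * k (x - a))"
    by (simp add: sum.cartesian_product sum_distrib_right case_prod_beta)
  finally show ?thesis .
qed

lemma convolved_plan_marginal_snd:
  assumes "finite G" and "\<And>a b. a \<in> G \<Longrightarrow> b \<in> G \<Longrightarrow> y - (b - a) \<in> I"
  shows "(\<Sum>\<^sub>\<infinity>x\<in>I. convolved_plan G k \<gamma> (x, y)) = (\<Sum>b\<in>G. (\<Sum>a\<in>G. \<gamma> (a, b)) * k (y - b))"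
proof -
  have "(\<Sum>\<^sub>\<infinity>x\<in>I. convolved_plan G k \<gamma> (x, y))
      = (\<Sum>ab\<in>G \<times> G. \<Sum>\<^sub>\<infinity>x\<in>I. of_bool (y = x + (snd ab - fst ab)) * (\<gamma> ab * k (x - fst ab)))"
    unfolding convolved_plan_def prod.case using assms(1) by (intro infsum_sum_ennreal) simp
  also have "\<dots> = (\<Sum>ab\<in>G \<times> G. \<Sum>\<^sub>\<infinity>x\<in>I. of_bool (x = y - (snd ab - fst ab)) * (\<gamma> ab * k (x - fst ab)))"
    by (intro sum.cong infsum_cong) (auto simp: algebra_simps)
  also have "\<dots> = (\<Sum>ab\<in>G \<times> G. \<gamma> ab * k (y - snd ab))"
    using assms(2) by (intro sum.cong) (auto simp: infsum_of_bool_eq)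
  also have "\<dots> = (\<Sum>a\<in>G. \<Sum>b\<in>G. \<gamma> (a, b) * k (y - b))"
    by (simp add: sum.cartesian_product case_prod_beta)
  also have "\<dots> = (\<Sum>b\<in>G. (\<Sum>a\<in>G. \<gamma> (a, b)) * k (y - b))"
    by (subst sum.swap) (simp add: sum_distrib_right)
  finally show ?thesis .
qed

lemma convolved_plan_cost:
  fixes c :: "'a::ab_group_add \<Rightarrow> 'a \<Rightarrow> ennreal"
  assumes "finite G" and "\<And>x a b. x \<in> I \<Longrightarrow> a \<in> G \<Longrightarrow> b \<in> G \<Longrightarrow> x + (b - a) \<in> I"
    and "\<And>a. a \<in> G \<Longrightarrow> (\<Sum>\<^sub>\<infinity>x\<in>I. k (x - a)) = 1"
    and "\<And>x y d. c (x + d) (y + d) = c x y"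
  shows "(\<Sum>\<^sub>\<infinity>xy\<in>I \<times> I. convolved_plan G k \<gamma> xy * c (fst xy) (snd xy))
       = (\<Sum>ab\<in>G \<times> G. \<gamma> ab * c (fst ab) (snd ab))"
proof -
  have shifted_cost: "(\<Sum>\<^sub>\<infinity>xy\<in>I \<times> I.
            of_bool (snd xy = fst xy + (b - a)) * (\<gamma> (a, b) * k (fst xy - a)) * c (fst xy) (snd xy))
         = \<gamma> (a, b) * c a b" if "a \<in> G" "b \<in> G" for a b
  proof -
    have "(\<Sum>\<^sub>\<infinity>xy\<in>I \<times> I.
            of_bool (snd xy = fst xy + (b - a)) * (\<gamma> (a, b) * k (fst xy - a)) * c (fst xy) (snd xy))
        = (\<Sum>\<^sub>\<infinity>xy\<in>(\<lambda>x. (x, x + (b - a))) ` I. \<gamma> (a, b) * k (fst xy - a) * c (fst xy) (snd xy))"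
      using assms(2) that by (intro infsum_cong_neutral) auto
    also have "\<dots> = (\<Sum>\<^sub>\<infinity>x\<in>I. \<gamma> (a, b) * k (x - a) * c x (x + (b - a)))"
      by (subst infsum_reindex) (auto simp: inj_on_def comp_def)
    also have "\<dots> = (\<Sum>\<^sub>\<infinity>x\<in>I. (\<gamma> (a, b) * c a b) * k (x - a))"
      using assms(4)[of a "x - a" b for x] by (simp add: algebra_simps)
    also have "\<dots> = \<gamma> (a, b) * c a b"
      using assms(3) that by (simp add: infsum_cmult_right_ennreal)
    finally show ?thesis .
  qed
  have "(\<Sum>\<^sub>\<infinity>xy\<in>I \<times> I. convolved_plan G k \<gamma> xy * c (fst xy) (snd xy))
      = (\<Sum>ab\<in>G \<times> G. \<Sum>\<^sub>\<infinity>xy\<in>I \<times> I.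
            of_bool (snd xy = fst xy + (snd ab - fst ab)) * (\<gamma> ab * k (fst xy - fst ab)) * c (fst xy) (snd xy))"
    unfolding convolved_plan_def case_prod_beta sum_distrib_right using assms(1)
    by (intro infsum_sum_ennreal) simp
  also have "\<dots> = (\<Sum>ab\<in>G \<times> G. \<gamma> ab * c (fst ab) (snd ab))"
    using shifted_cost by (intro sum.cong) auto
  finally show ?thesis .
qed

lemma igrid_add: "x \<in> igrid \<Delta> \<Longrightarrow> y \<in> igrid \<Delta> \<Longrightarrow> x + y \<in> igrid \<Delta>"
  unfolding igrid_def by clarsimp (metis add_divide_distrib of_int_add)

lemma igrid_diff: "x \<in> igrid \<Delta> \<Longrightarrow> y \<in> igrid \<Delta> \<Longrightarrow> x - y \<in> igrid \<Delta>"
  unfolding igrid_def by clarsimp (metis diff_divide_distrib of_int_diff)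

lemma zero_in_igrid: "(0, 0) \<in> igrid \<Delta>"
  unfolding igrid_def by force

lemma grid_subset_igrid: "grid \<Delta> \<subseteq> igrid \<Delta>"
  unfolding grid_def igrid_def by clarsimp (metis of_int_of_nat_eq)

lemma grid_diff_in_igrid: "a \<in> grid \<Delta> \<Longrightarrow> b \<in> grid \<Delta> \<Longrightarrow> b - a \<in> igrid \<Delta>"
  using grid_subset_igrid igrid_diff by blast

lemma finite_grid: "finite (grid \<Delta>)"
proof -
  have "grid \<Delta> = (\<lambda>(i, j). (real i / real \<Delta>, real j / real \<Delta>)) ` ({..<\<Delta>} \<times> {..<\<Delta>})"
    unfolding grid_def by auto
  then show ?thesis by simp
qed

lemma EMD_le_plan_cost:
  assumes "\<forall>x\<in>S. (\<Sum>\<^sub>\<infinity>y\<in>S. \<gamma> (x, y)) = ennreal (\<mu> x)"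
    and "\<forall>y\<in>S. (\<Sum>\<^sub>\<infinity>x\<in>S. \<gamma> (x, y)) = ennreal (\<nu> y)"
  shows "EMD S \<mu> \<nu> \<le> (\<Sum>\<^sub>\<infinity>xy\<in>S \<times> S. \<gamma> xy * ennreal (l1dist (fst xy) (snd xy)))"
  unfolding EMD_def using assms by (intro Inf_lower) blast

lemma le_EMD:
  assumes "\<And>\<gamma>. \<forall>x\<in>S. (\<Sum>\<^sub>\<infinity>y\<in>S. \<gamma> (x, y)) = ennreal (\<mu> x) \<Longrightarrow>
      \<forall>y\<in>S. (\<Sum>\<^sub>\<infinity>x\<in>S. \<gamma> (x, y)) = ennreal (\<nu> y) \<Longrightarrow>
      u \<le> (\<Sum>\<^sub>\<infinity>xy\<in>S \<times> S. \<gamma> xy * ennreal (l1dist (fst xy) (snd xy)))"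
  shows "u \<le> EMD S \<mu> \<nu>"
  unfolding EMD_def using assms by (intro Inf_greatest) blast

lemma EMD_zero: "EMD S (\<lambda>_. 0) (\<lambda>_. 0) = 0"
  using EMD_le_plan_cost[of S "\<lambda>_. 0"] by simp

lemma l1dist_translate: "l1dist (x + d) (y + d) = l1dist x y"
  by (simp add: l1dist_def)

definition gauss :: "real \<Rightarrow> pt \<Rightarrow> real" where
  "gauss \<sigma> d = exp (- sqdist2 d (0, 0) / (2 * \<sigma>^2))"

lemma Zc_eq_infsum_gauss: "Zc \<Delta> \<sigma> = (\<Sum>\<^sub>\<infinity>d\<in>igrid \<Delta>. gauss \<sigma> d)"
  by (simp add: Zc_def gauss_def)

lemma heatmap_eq_sum_gauss: "heatmap \<Delta> \<sigma> p x = (\<Sum>a\<in>grid \<Delta>. gauss \<sigma> (x - a) / Zc \<Delta> \<sigma> * p a)"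
  by (simp add: heatmap_def gauss_def sqdist2_def)

lemma heatmap_eq_0_if_not_summable:
  assumes "\<not> gauss \<sigma> summable_on igrid \<Delta>"
  shows "heatmap \<Delta> \<sigma> p = (\<lambda>_. 0)"
  using assms by (simp add: fun_eq_iff heatmap_eq_sum_gauss Zc_eq_infsum_gauss infsum_not_exists)

lemma ennreal_heatmap:
  assumes "\<forall>a\<in>grid \<Delta>. p a \<ge> 0"
  shows "ennreal (heatmap \<Delta> \<sigma> p x) = (\<Sum>a\<in>grid \<Delta>. ennreal (p a) * ennreal (gauss \<sigma> (x - a) / Zc \<Delta> \<sigma>))"
proof -
  have "Zc \<Delta> \<sigma> \<ge> 0"
    unfolding Zc_eq_infsum_gauss by (rule infsum_nonneg) (simp add: gauss_def)
  then have kernel_nonneg: "gauss \<sigma> (x - a) / Zc \<Delta> \<sigma> \<ge> 0" for a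
    by (simp add: gauss_def)
  have "ennreal (heatmap \<Delta> \<sigma> p x) = (\<Sum>a\<in>grid \<Delta>. ennreal (gauss \<sigma> (x - a) / Zc \<Delta> \<sigma> * p a))"
    unfolding heatmap_eq_sum_gauss
    by (rule sum_ennreal[symmetric]) (use assms kernel_nonneg mult_nonneg_nonneg in blast)
  also have "\<dots> = (\<Sum>a\<in>grid \<Delta>. ennreal (p a) * ennreal (gauss \<sigma> (x - a) / Zc \<Delta> \<sigma>))"
    using assms kernel_nonneg by (intro sum.cong refl) (metis ennreal_mult mult.commute)
  finally show ?thesis .
qed

lemma infsum_gauss_normalized:
  assumes "gauss \<sigma> summable_on igrid \<Delta>" and "a \<in> igrid \<Delta>"
  shows "(\<Sum>\<^sub>\<infinity>x\<in>igrid \<Delta>. ennreal (gauss \<sigma> (x - a) / Zc \<Delta> \<sigma>)) = 1"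
proof -
  have "1 = (\<Sum>\<^sub>\<infinity>d\<in>{(0, 0)}. gauss \<sigma> d)"
    by (simp add: gauss_def sqdist2_def)
  also have "\<dots> \<le> Zc \<Delta> \<sigma>"
    unfolding Zc_eq_infsum_gauss using assms(1) zero_in_igrid
    by (intro infsum_mono_neutral) (auto simp: gauss_def)
  finally have "Zc \<Delta> \<sigma> > 0" by simp
  then have normalized: "((\<lambda>d. gauss \<sigma> d / Zc \<Delta> \<sigma>) has_sum 1) (igrid \<Delta>)"
    using has_sum_divide_const[OF has_sum_infsum[OF assms(1)], of "Zc \<Delta> \<sigma>"]
    by (simp add: Zc_eq_infsum_gauss)
  have "(\<Sum>\<^sub>\<infinity>x\<in>igrid \<Delta>. ennreal (gauss \<sigma> (x - a) / Zc \<Delta> \<sigma>))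
      = (\<Sum>\<^sub>\<infinity>d\<in>igrid \<Delta>. ennreal (gauss \<sigma> d / Zc \<Delta> \<sigma>))"
    using igrid_add igrid_diff assms(2) by (rule infsum_translate)
  also have "\<dots> = ennreal (\<Sum>\<^sub>\<infinity>d\<in>igrid \<Delta>. gauss \<sigma> d / Zc \<Delta> \<sigma>)"
    using normalized \<open>Zc \<Delta> \<sigma> > 0\<close>
    by (intro infsum_ennreal) (auto dest: has_sum_imp_summable simp: gauss_def)
  also have "\<dots> = 1"
    using normalized by (simp add: infsumI)
  finally show ?thesis .
qed

lemma EMD_heatmap_le_plan_cost:
  fixes \<gamma> :: "pt \<times> pt \<Rightarrow> ennreal"
  assumes summable: "gauss \<sigma> summable_on igrid \<Delta>"
    and "\<forall>a\<in>grid \<Delta>. p a \<ge> 0" and "\<forall>a\<in>grid \<Delta>. q a \<ge> 0"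
    and marginal_p: "\<forall>a\<in>grid \<Delta>. (\<Sum>\<^sub>\<infinity>b\<in>grid \<Delta>. \<gamma> (a, b)) = ennreal (p a)"
    and marginal_q: "\<forall>b\<in>grid \<Delta>. (\<Sum>\<^sub>\<infinity>a\<in>grid \<Delta>. \<gamma> (a, b)) = ennreal (q b)"
  shows "EMD (igrid \<Delta>) (heatmap \<Delta> \<sigma> p) (heatmap \<Delta> \<sigma> q)
           \<le> (\<Sum>\<^sub>\<infinity>ab\<in>grid \<Delta> \<times> grid \<Delta>. \<gamma> ab * ennreal (l1dist (fst ab) (snd ab)))"
proof -
  define k where "k d = ennreal (gauss \<sigma> d / Zc \<Delta> \<sigma>)" for d
  have shift: "x + (b - a) \<in> igrid \<Delta>" "x - (b - a) \<in> igrid \<Delta>"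
    if "x \<in> igrid \<Delta>" "a \<in> grid \<Delta>" "b \<in> grid \<Delta>" for x a b
    using that by (simp_all add: igrid_add igrid_diff grid_diff_in_igrid)
  have "(\<Sum>\<^sub>\<infinity>y\<in>igrid \<Delta>. convolved_plan (grid \<Delta>) k \<gamma> (x, y)) = ennreal (heatmap \<Delta> \<sigma> p x)"
    if "x \<in> igrid \<Delta>" for x
  proof -
    have "(\<Sum>\<^sub>\<infinity>y\<in>igrid \<Delta>. convolved_plan (grid \<Delta>) k \<gamma> (x, y))
        = (\<Sum>a\<in>grid \<Delta>. (\<Sum>b\<in>grid \<Delta>. \<gamma> (a, b)) * k (x - a))"
      using finite_grid shift(1)[OF that] by (rule convolved_plan_marginal_fst)
    also have "\<dots> = ennreal (heatmap \<Delta> \<sigma> p x)"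
      using marginal_p finite_grid assms(2) by (simp add: ennreal_heatmap k_def)
    finally show ?thesis .
  qed
  moreover have "(\<Sum>\<^sub>\<infinity>x\<in>igrid \<Delta>. convolved_plan (grid \<Delta>) k \<gamma> (x, y)) = ennreal (heatmap \<Delta> \<sigma> q y)"
    if "y \<in> igrid \<Delta>" for y
  proof -
    have "(\<Sum>\<^sub>\<infinity>x\<in>igrid \<Delta>. convolved_plan (grid \<Delta>) k \<gamma> (x, y))
        = (\<Sum>b\<in>grid \<Delta>. (\<Sum>a\<in>grid \<Delta>. \<gamma> (a, b)) * k (y - b))"
      using finite_grid shift(2)[OF that] by (rule convolved_plan_marginal_snd)
    also have "\<dots> = ennreal (heatmap \<Delta> \<sigma> q y)"
      using marginal_q finite_grid assms(3) by (simp add: ennreal_heatmap k_def)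
    finally show ?thesis .
  qed
  ultimately have "EMD (igrid \<Delta>) (heatmap \<Delta> \<sigma> p) (heatmap \<Delta> \<sigma> q)
      \<le> (\<Sum>\<^sub>\<infinity>xy\<in>igrid \<Delta> \<times> igrid \<Delta>. convolved_plan (grid \<Delta>) k \<gamma> xy * ennreal (l1dist (fst xy) (snd xy)))"
    by (intro EMD_le_plan_cost ballI)
  also have "\<dots> = (\<Sum>ab\<in>grid \<Delta> \<times> grid \<Delta>. \<gamma> ab * ennreal (l1dist (fst ab) (snd ab)))"
    using infsum_gauss_normalized[OF summable] grid_subset_igrid unfolding k_def
    by (intro convolved_plan_cost[where c = "\<lambda>x y. ennreal (l1dist x y)", OF finite_grid shift(1)])
       (auto simp: l1dist_translate)
  finally show ?thesis
    using finite_grid by simp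
qed

theorem lemma7:
  fixes \<Delta> :: nat and \<sigma> :: real and p q :: "pt \<Rightarrow> real"
  assumes "\<Delta> > 0"
    and "\<forall>a\<in>grid \<Delta>. p a \<ge> 0" and "\<forall>a\<in>grid \<Delta>. q a \<ge> 0"
    and "(\<Sum>a\<in>grid \<Delta>. \<bar>p a\<bar>) = (\<Sum>a\<in>grid \<Delta>. \<bar>q a\<bar>)"
    and "\<sigma> > 0"
  shows "EMD (igrid \<Delta>) (heatmap \<Delta> \<sigma> p) (heatmap \<Delta> \<sigma> q) \<le> EMD (grid \<Delta>) p q"
proof (cases "gauss \<sigma> summable_on igrid \<Delta>")
  (* Unequal masses leave no plan, so the right side is \<infinity>;
     and if the Gaussian series diverged, Zc would be 0 and both heatmaps would vanish. *)
  case True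
  then show ?thesis
    using EMD_heatmap_le_plan_cost[OF True assms(2,3)] by (intro le_EMD)
next
  case False
  then show ?thesis
    by (simp add: heatmap_eq_0_if_not_summable EMD_zero)
qed

end
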